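(* Consider a buyer with linear valuation $v(\mathbf{x})=\sum_{j=1}^m\tau_jx_j$ ($\tau_j\ge0$) and budget $b\in\mathbb{R}_{\ge0}$. Let $\mathbf{p}$ be a monotone lower-continuous pricing function and $\hat{\mathbf{p}}=\mathrm{conv}(\mathbf{p})$. Then $r(\hat{\mathbf{p}}\mid v,b)\ge r(\mathbf{p}\mid v,b)$.
   Context: A pricing function is a monotone $\mathbf{p}:[0,1]^m\to\mathbb{R}_{\ge0}$ with $\mathbf{p}(\mathbf{0})=0$. For budget $b\in\mathbb{R}_{\ge0}\cup\{\infty\}$: $F(\mathbf{p}\mid b)=\{\mathbf{x}:\mathbf{p}(\mathbf{x})\le b\}$; $u^*=\sup_{\mathbf{x}\in F}(v(\mathbf{x})-\mathbf{p}(\mathbf{x}))$; $\mathrm{Dem}(\mathbf{p}\mid v,b)=\{\mathbf{x}\in F:v(\mathbf{x})-\mathbf{p}(\mathbf{x})=u^*\}$; $r(\mathbf{p}\mid v,b)=\sup_{\mathbf{x}\in\mathrm{Dem}}\mathbf{p}(\mathbf{x})$. $\mathrm{conv}(\mathbf{p})(\mathbf{x})=\inf U(\mathbf{x})$ where $U(\mathbf{x})$ is the set of $y$ for which there exist $k\in\mathbb{N}$, $\lambda\in[0,1]^k$ with $\sum\lambda_i=1$, and $\mathbf{x}^{(i)}\in[0,1]^m$ with $\mathbf{x}=\sum\lambda_i\mathbf{x}^{(i)}$ and $y\ge\sum\lambda_i\mathbf{p}(\mathbf{x}^{(i)})$. Lower-continuous: $f(\hat{\mathbf{x}})=\sup_{\delta>0}\inf_{\|\mathbf{x}-\hat{\mathbf{x}}\|_\infty\le\delta}f(\mathbf{x})$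 for all $\hat{\mathbf{x}}$. *)

theory Defs
  imports "HOL-Analysis.Analysis"
begin

text \<open>Goods are indexed by a finite type 'm (so m = CARD('m)); bundles are vectors
  in real^'m and the domain is the cube [0,1]^m.\<close>

definition cube :: "(real^'m) set" where
  "cube = {x. \<forall>i. 0 \<le> x$i \<and> x$i \<le> 1}"

definition pricing_function :: "(real^'m \<Rightarrow> real) \<Rightarrow> bool" where
  "pricing_function p \<longleftrightarrow>
     (\<forall>x\<in>cube. 0 \<le> p x) \<and> p 0 = 0 \<and>
     (\<forall>x\<in>cube. \<forall>y\<in>cube. (\<forall>i. x$i \<le> y$i) \<longrightarrow> p x \<le> p y)"

definition lower_continuous :: "(real^'m \<Rightarrow> real) \<Rightarrow> bool" where
  "lower_continuous f \<longleftrightarrow>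
     (\<forall>xh\<in>cube. f xh =
        Sup {Inf (f ` {x\<in>cube. \<forall>i. \<bar>x$i - xh$i\<bar> \<le> \<delta>}) | \<delta>::real. \<delta> > 0})"

definition linear_val :: "real^'m \<Rightarrow> real^'m \<Rightarrow> real" where
  "linear_val \<tau> x = (\<Sum>j\<in>UNIV. \<tau>$j * x$j)"

definition feasible :: "(real^'m \<Rightarrow> real) \<Rightarrow> real \<Rightarrow> (real^'m) set" where
  "feasible p b = {x\<in>cube. p x \<le> b}"

definition opt_util :: "(real^'m \<Rightarrow> real) \<Rightarrow> (real^'m \<Rightarrow> real) \<Rightarrow> real \<Rightarrow> ereal" where
  "opt_util p v b = (SUP x\<in>feasible p b. ereal (v x - p x))"

definition demand :: "(real^'m \<Rightarrow> real) \<Rightarrow> (real^'m \<Rightarrow> real) \<Rightarrow> real \<Rightarrow> (real^'m) set" where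
  "demand p v b = {x\<in>feasible p b. ereal (v x - p x) = opt_util p v b}"

text \<open>Revenue: supremum of prices over the demand set, in the extended reals
  (equal to -\<infinity> if the demand set is empty).\<close>
definition revenue :: "(real^'m \<Rightarrow> real) \<Rightarrow> (real^'m \<Rightarrow> real) \<Rightarrow> real \<Rightarrow> ereal" where
  "revenue p v b = (SUP x\<in>demand p v b. ereal (p x))"

definition conv_env :: "(real^'m \<Rightarrow> real) \<Rightarrow> real^'m \<Rightarrow> real" where
  "conv_env p x = Inf {y. \<exists>(k::nat) (lam::nat \<Rightarrow> real) (xs::nat \<Rightarrow> real^'m).
       (\<forall>i<k. 0 \<le> lam i \<and> lam i \<le> 1 \<and> xs i \<in> cube) \<and> (\<Sum>i<k. lam i) = 1 \<and>
       x = (\<Sum>i<k. lam i *\<^sub>R xs i) \<and> y \<ge> (\<Sum>i<k. lam i * p (xs i))}"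

end

theory Submission
  imports Defs
begin

text \<open>Let \<open>E\<close> be the epigraph of \<open>p\<close> over the cube, truncated at the top price
  \<open>p(1,\<dots>,1)\<close>. Lower continuity makes \<open>E\<close> compact, so its convex hull is compact and
  contains the graph of \<open>conv(p)\<close>, while every point \<open>(x, t)\<close> of the hull has
  \<open>conv(p)(x) \<le> t\<close>. Maximising the linear utility \<open>v(x) - t\<close> over the part of the hull
  with \<open>t \<le> b\<close> gives a bundle \<open>y\<close> demanded under \<open>conv(p)\<close>. If the budget binds at \<open>y\<close>,
  then \<open>conv(p)\<close> earns \<open>b\<close>, which bounds every revenue. Otherwise, by convexity, the
  maximum is global on the hull; a linear functional maximised at a convex combination is
  maximised at every point carrying positive weight, so it is attained at a point of \<open>E\<close>
  with price below \<open>b\<close>. Hence \<open>p\<close> attains the same optimal utility, and as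
  \<open>conv(p) \<le> p\<close>, every bundle demanded under \<open>p\<close> is demanded under \<open>conv(p)\<close> at the
  same price.\<close>

lemma convex_hull_linear_max_face:
  fixes g :: "'a::real_vector \<Rightarrow> real"
  assumes "linear g" and z0: "z0 \<in> convex hull K" and max: "\<And>w. w \<in> K \<Longrightarrow> g w \<le> g z0"
  shows "z0 \<in> convex hull {w\<in>K. g w = g z0}"
proof -
  obtain S u where S: "finite S" "S \<subseteq> K" and u: "\<And>w. w \<in> S \<Longrightarrow> 0 \<le> u w" "sum u S = 1"
    and z0_eq: "(\<Sum>w\<in>S. u w *\<^sub>R w) = z0"
    using z0 unfolding convex_hull_explicit by blast
  define S' where "S' = {w\<in>S. u w \<noteq> 0}"
  have "(\<Sum>w\<in>S. u w * (g z0 - g w)) = g z0 * sum u S - g (\<Sum>w\<in>S. u w *\<^sub>R w)"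
    using \<open>linear g\<close> by (simp add: linear_sum linear_scale algebra_simps sum_subtractf sum_distrib_left)
  also have "\<dots> = 0"
    using u(2) z0_eq by simp
  finally have sum0: "(\<Sum>w\<in>S. u w * (g z0 - g w)) = 0" .
  have nonneg: "0 \<le> u w * (g z0 - g w)" if "w \<in> S" for w
    using u(1) max S(2) that by (simp add: subset_iff)
  have "\<forall>w\<in>S. u w * (g z0 - g w) = 0"
    using sum_nonneg_eq_0_iff[OF S(1) nonneg] sum0 by (rule iffD1)
  then have "S' \<subseteq> {w\<in>K. g w = g z0}"
    using S(2) by (auto simp: S'_def)
  moreover have S'_sub: "S' \<subseteq> S" and u_zero: "\<forall>w\<in>S - S'. u w = 0"
    by (auto simp: S'_def)
  moreover have "sum u S' = 1"
    using u(2) sum.mono_neutral_left[OF S(1) S'_sub, of u] u_zero by simp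
  moreover have "(\<Sum>w\<in>S'. u w *\<^sub>R w) = z0"
    using z0_eq sum.mono_neutral_left[OF S(1) S'_sub, of "\<lambda>w. u w *\<^sub>R w"] u_zero by simp
  moreover have "finite S'" "\<forall>w\<in>S'. 0 \<le> u w"
    using S(1) S'_sub u(1) finite_subset by blast+
  ultimately show ?thesis
    unfolding convex_hull_explicit by (intro CollectI exI[of _ S'] exI[of _ u]) simp
qed

lemma convex_hull_linear_less_witness:
  fixes h :: "'a::real_vector \<Rightarrow> real"
  assumes "linear h" and "z \<in> convex hull S" and "h z < b"
  shows "\<exists>w\<in>S. h w < b"
proof (rule ccontr)
  assume "\<not> (\<exists>w\<in>S. h w < b)"
  then have "S \<subseteq> h -` {b..}"
    by (auto simp: not_less)
  moreover have "convex (h -` {b..})"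
    using \<open>linear h\<close> by (intro convex_linear_vimage) auto
  ultimately have "convex hull S \<subseteq> h -` {b..}"
    by (rule hull_minimal)
  then show False
    using assms(2,3) by auto
qed

lemma linear_max_slack_constraint:
  fixes g h :: "'a::real_vector \<Rightarrow> real"
  assumes "convex C" "linear g" "linear h" "z0 \<in> C" "h z0 < b"
    and local_max: "\<And>z. z \<in> C \<Longrightarrow> h z \<le> b \<Longrightarrow> g z \<le> g z0"
    and "z \<in> C"
  shows "g z \<le> g z0"
proof (rule ccontr)
  assume "\<not> g z \<le> g z0"
  define d where "d = \<bar>h z - h z0\<bar>"
  define \<theta> where "\<theta> = (b - h z0) / (d + (b - h z0))"
  have "0 \<le> d" by (simp add: d_def)
  then have \<theta>: "0 < \<theta>" "\<theta> \<le> 1"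
    using \<open>h z0 < b\<close> by (auto simp: \<theta>_def)
  have "\<theta> * d = (b - h z0) * (d / (d + (b - h z0)))"
    by (simp add: \<theta>_def)
  also have "\<dots> \<le> (b - h z0) * 1"
    using \<open>0 \<le> d\<close> \<open>h z0 < b\<close> by (intro mult_left_mono) auto
  finally have "\<theta> * d \<le> b - h z0"
    by simp
  moreover have "\<theta> * (h z - h z0) \<le> \<theta> * d"
    using \<theta>(1) by (intro mult_left_mono) (auto simp: d_def)
  ultimately have "\<theta> * (h z - h z0) \<le> b - h z0"
    by linarith
  define m where "m = (1 - \<theta>) *\<^sub>R z0 + \<theta> *\<^sub>R z"
  have lin: "f m = f z0 + \<theta> * (f z - f z0)" if "linear f" for f :: "'a \<Rightarrow> real"
    using that by (simp add: m_def linear_add linear_scale) (simp add: algebra_simps)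
  have "m \<in> C"
    unfolding m_def using \<theta> by (intro convexD[OF assms(1,4,7)]) auto
  moreover have "h m \<le> b"
    using lin[OF \<open>linear h\<close>] \<open>\<theta> * (h z - h z0) \<le> b - h z0\<close> by simp
  ultimately have "g m \<le> g z0" by (rule local_max)
  moreover have "g m > g z0"
    using lin[OF \<open>linear g\<close>] \<theta>(1) \<open>\<not> g z \<le> g z0\<close> by simp
  ultimately show False by simp
qed

lemma cube_eq_cbox: "cube = cbox (0::real^'m) (vec 1)"
  unfolding cube_def interval_cbox_cart[symmetric] by (auto simp: less_eq_vec_def)

lemma convex_cube: "convex (cube :: (real^'m) set)"
  by (simp add: cube_eq_cbox)

lemma compact_cube: "compact (cube :: (real^'m) set)"
  by (simp add: cube_eq_cbox)

lemma linear_val_eq_inner: "linear_val \<tau> x = \<tau> \<bullet> x"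
  by (simp add: linear_val_def inner_vec_def)

lemma linear_linear_val: "linear (linear_val \<tau>)"
  unfolding linear_val_eq_inner[abs_def] linear_conv_bounded_linear
  by (rule bounded_linear_inner_right)

lemma pricing_function_nonneg: "pricing_function p \<Longrightarrow> x \<in> cube \<Longrightarrow> 0 \<le> p x"
  unfolding pricing_function_def by blast

lemma pricing_function_le_top: "pricing_function p \<Longrightarrow> x \<in> cube \<Longrightarrow> p x \<le> p (vec 1)"
  unfolding pricing_function_def by (auto simp: cube_def)

definition combination_bounds :: "(real^'m \<Rightarrow> real) \<Rightarrow> real^'m \<Rightarrow> real set" where
  "combination_bounds p x = {y. \<exists>(k::nat) (lam::nat \<Rightarrow> real) (xs::nat \<Rightarrow> real^'m).
       (\<forall>i<k. 0 \<le> lam i \<and> lam i \<le> 1 \<and> xs i \<in> cube) \<and> (\<Sum>i<k. lam i) = 1 \<and>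
       x = (\<Sum>i<k. lam i *\<^sub>R xs i) \<and> y \<ge> (\<Sum>i<k. lam i * p (xs i))}"

lemma conv_env_eq_Inf: "conv_env p x = Inf (combination_bounds p x)"
  by (simp add: conv_env_def combination_bounds_def)

lemma bdd_below_combination_bounds:
  assumes "pricing_function p"
  shows "bdd_below (combination_bounds p x)"
proof (rule bdd_belowI)
  fix y assume "y \<in> combination_bounds p x"
  then obtain k :: nat and lam xs
    where "\<forall>i<k. 0 \<le> lam i \<and> xs i \<in> cube" "(\<Sum>i<k. lam i * p (xs i)) \<le> y"
    unfolding combination_bounds_def by blast
  moreover from this(1) have "0 \<le> (\<Sum>i<k. lam i * p (xs i))"
    using pricing_function_nonneg[OF assms] by (intro sum_nonneg) simp
  ultimately show "0 \<le> y" by linarith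
qed

lemma conv_env_le_combination:
  fixes k :: nat
  assumes "pricing_function p"
    and "\<forall>i<k. 0 \<le> lam i \<and> lam i \<le> 1 \<and> xs i \<in> cube" "(\<Sum>i<k. lam i) = 1"
    and "x = (\<Sum>i<k. lam i *\<^sub>R xs i)"
  shows "conv_env p x \<le> (\<Sum>i<k. lam i * p (xs i))"
proof -
  have "(\<Sum>i<k. lam i * p (xs i)) \<in> combination_bounds p x"
    unfolding combination_bounds_def using assms(2-) by blast
  then show ?thesis
    unfolding conv_env_eq_Inf by (rule cInf_lower[OF _ bdd_below_combination_bounds[OF assms(1)]])
qed

lemma conv_env_le_self:
  assumes "pricing_function p" and "x \<in> cube"
  shows "conv_env p x \<le> p x"
  using conv_env_le_combination[OF assms(1), of 1 "\<lambda>_. 1" "\<lambda>_. x"] assms(2) by simp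

lemma conv_env_approx:
  assumes "x \<in> cube" and "0 < e"
  obtains k :: nat and lam xs
  where "\<forall>i<k. 0 \<le> lam i \<and> lam i \<le> 1 \<and> xs i \<in> cube" "(\<Sum>i<k. lam i) = 1"
    and "x = (\<Sum>i<k. lam i *\<^sub>R xs i)" "(\<Sum>i<k. lam i * p (xs i)) < conv_env p x + e"
proof -
  have "p x \<in> combination_bounds p x"
    unfolding combination_bounds_def
    by (intro CollectI exI[of _ "1::nat"] exI[of _ "\<lambda>_. 1::real"] exI[of _ "\<lambda>_. x"]) (simp add: assms(1))
  then have "combination_bounds p x \<noteq> {}"
    by blast
  moreover have "Inf (combination_bounds p x) < conv_env p x + e"
    using assms(2) by (simp add: conv_env_eq_Inf)
  ultimately obtain y where "y \<in> combination_bounds p x" "y < conv_env p x + e"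
    using cInf_lessD by blast
  then obtain k :: nat and lam xs
    where "\<forall>i<k. 0 \<le> lam i \<and> lam i \<le> 1 \<and> xs i \<in> cube" "(\<Sum>i<k. lam i) = 1"
      "x = (\<Sum>i<k. lam i *\<^sub>R xs i)" "(\<Sum>i<k. lam i * p (xs i)) \<le> y"
    unfolding combination_bounds_def by blast
  moreover from this(4) have "(\<Sum>i<k. lam i * p (xs i)) < conv_env p x + e"
    using \<open>y < conv_env p x + e\<close> by linarith
  ultimately show ?thesis
    using that by blast
qed

definition price_epigraph :: "(real^'m \<Rightarrow> real) \<Rightarrow> ((real^'m) \<times> real) set" where
  "price_epigraph p = {(x, t). x \<in> cube \<and> p x \<le> t \<and> t \<le> p (vec 1)}"

lemma lower_continuous_le_limit:
  assumes lc: "lower_continuous p" and pf: "pricing_function p"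
    and "a \<in> cube" and s: "\<And>n. s n \<in> cube" "s \<longlonglongrightarrow> a"
    and f: "f \<longlonglongrightarrow> t" "\<And>n. p (s n) \<le> f n"
  shows "p a \<le> t"
proof -
  let ?N = "\<lambda>\<delta>. {x\<in>cube. \<forall>i. \<bar>x$i - a$i\<bar> \<le> \<delta>}"
  have "p a = Sup {Inf (p ` ?N \<delta>) | \<delta>::real. \<delta> > 0}"
    using lc \<open>a \<in> cube\<close> unfolding lower_continuous_def by blast
  also have "\<dots> \<le> t"
  proof (rule cSup_least)
    show "{Inf (p ` ?N \<delta>) | \<delta>::real. \<delta> > 0} \<noteq> {}"
      using zero_less_one by blast
  next
    fix r assume "r \<in> {Inf (p ` ?N \<delta>) | \<delta>::real. \<delta> > 0}"
    then obtain \<delta> :: real where "\<delta> > 0" and r: "r = Inf (p ` ?N \<delta>)"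
      by auto
    have "eventually (\<lambda>n. dist (s n) a < \<delta>) sequentially"
      using s(2) \<open>\<delta> > 0\<close> by (rule tendstoD)
    then have "eventually (\<lambda>n. r \<le> f n) sequentially"
    proof (rule eventually_mono)
      fix n assume "dist (s n) a < \<delta>"
      have "\<bar>s n $ i - a $ i\<bar> \<le> \<delta>" for i
        using component_le_norm_cart[of "s n - a" i] \<open>dist (s n) a < \<delta>\<close> by (simp add: dist_norm)
      then have "s n \<in> ?N \<delta>"
        using s(1) by blast
      moreover have "bdd_below (p ` ?N \<delta>)"
        using pricing_function_nonneg[OF pf] by (intro bdd_belowI[of _ 0]) blast
      ultimately have "r \<le> p (s n)"
        unfolding r by (simp add: cInf_lower)
      then show "r \<le> f n"
        using f(2)[of n] by linarith
    qed
    then show "r \<le> t"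
      using f(1) by (intro tendsto_lowerbound) auto
  qed
  finally show ?thesis .
qed

lemma compact_price_epigraph:
  assumes "pricing_function p" and "lower_continuous p"
  shows "compact (price_epigraph p)"
  unfolding compact_eq_bounded_closed
proof
  have "price_epigraph p \<subseteq> cube \<times> cbox 0 (p (vec 1))"
    using pricing_function_nonneg[OF assms(1)] by (force simp: price_epigraph_def)
  then show "bounded (price_epigraph p)"
    by (rule bounded_subset[rotated]) (simp add: compact_cube bounded_Times compact_imp_bounded)
next
  show "closed (price_epigraph p)"
    unfolding closed_sequential_limits
  proof (intro allI impI, elim conjE)
    fix z l assume z: "\<forall>n. z n \<in> price_epigraph p" and "z \<longlonglongrightarrow> l"
    then have lim: "(\<lambda>n. fst (z n)) \<longlonglongrightarrow> fst l" "(\<lambda>n. snd (z n)) \<longlonglongrightarrow> snd l"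
      by (auto intro: tendsto_fst tendsto_snd)
    have z_cube: "\<And>n. fst (z n) \<in> cube"
      using z by (auto simp: price_epigraph_def case_prod_beta)
    have "fst l \<in> cube"
      by (rule closed_sequentially[OF compact_imp_closed[OF compact_cube] z_cube lim(1)])
    moreover have "p (fst l) \<le> snd l"
      using z by (intro lower_continuous_le_limit[OF assms(2,1) \<open>fst l \<in> cube\<close> z_cube lim])
        (auto simp: price_epigraph_def case_prod_beta)
    moreover have "snd l \<le> p (vec 1)"
      using z by (intro LIMSEQ_le_const2[OF lim(2)]) (auto simp: price_epigraph_def case_prod_beta)
    ultimately show "l \<in> price_epigraph p"
      by (auto simp: price_epigraph_def case_prod_beta)
  qed
qed

lemma price_epigraph_hull_above_conv_env:
  assumes pf: "pricing_function p" and "(x, t) \<in> convex hull price_epigraph p"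
  shows "x \<in> cube \<and> conv_env p x \<le> t"
proof -
  obtain k :: nat and u w where w: "\<forall>i\<in>{1..k}. 0 \<le> u i \<and> w i \<in> price_epigraph p"
    and u: "sum u {1..k} = 1" and xt: "(\<Sum>i = 1..k. u i *\<^sub>R w i) = (x, t)"
    using assms(2) unfolding convex_hull_indexed by blast
  define lam where "lam i = u (Suc i)" for i
  define xs where "xs i = fst (w (Suc i))" for i
  have w': "\<forall>i<k. 0 \<le> lam i \<and> xs i \<in> cube \<and> p (xs i) \<le> snd (w (Suc i))"
    using w by (auto simp: lam_def xs_def price_epigraph_def case_prod_beta)
  have lam_sum: "(\<Sum>i<k. lam i) = 1"
    using u by (simp add: lam_def sum.atLeast1_atMost_eq)
  have "lam i \<le> 1" if "i < k" for i
    using member_le_sum[of "Suc i" "{1..k}" u] w that u by (auto simp: lam_def)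
  with w' have comb: "\<forall>i<k. 0 \<le> lam i \<and> lam i \<le> 1 \<and> xs i \<in> cube"
    by blast
  have x: "x = (\<Sum>i<k. lam i *\<^sub>R xs i)"
    using arg_cong[OF xt, of fst] by (simp add: fst_sum sum.atLeast1_atMost_eq lam_def xs_def)
  have t: "t = (\<Sum>i<k. lam i * snd (w (Suc i)))"
    using arg_cong[OF xt, of snd] by (simp add: snd_sum sum.atLeast1_atMost_eq lam_def)
  have "conv_env p x \<le> (\<Sum>i<k. lam i * p (xs i))"
    by (rule conv_env_le_combination[OF pf comb lam_sum x])
  also have "\<dots> \<le> t"
    unfolding t using w' by (intro sum_mono mult_left_mono) auto
  finally have "conv_env p x \<le> t" .
  moreover have "x \<in> cube"
    unfolding x using comb by (intro convex_sum[OF _ convex_cube lam_sum]) auto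
  ultimately show ?thesis
    by blast
qed

lemma conv_env_mem_price_epigraph_hull:
  assumes pf: "pricing_function p" and lc: "lower_continuous p" and "x \<in> cube"
  shows "(x, conv_env p x) \<in> convex hull price_epigraph p"
proof -
  have "closed (convex hull price_epigraph p)"
    using compact_convex_hull[OF compact_price_epigraph[OF pf lc]] by (rule compact_imp_closed)
  moreover have "\<forall>e>0. \<exists>z\<in>convex hull price_epigraph p. dist z (x, conv_env p x) < e"
  proof (intro allI impI)
    fix e :: real assume "0 < e"
    obtain k :: nat and lam xs where comb: "\<forall>i<k. 0 \<le> lam i \<and> lam i \<le> 1 \<and> xs i \<in> cube"
      and lam_sum: "(\<Sum>i<k. lam i) = 1" and x: "x = (\<Sum>i<k. lam i *\<^sub>R xs i)"
      and close: "(\<Sum>i<k. lam i * p (xs i)) < conv_env p x + e"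
      using conv_env_approx[OF \<open>x \<in> cube\<close> \<open>0 < e\<close>] by blast
    define t where "t = (\<Sum>i<k. lam i * p (xs i))"
    have "(\<Sum>i<k. lam i *\<^sub>R (xs i, p (xs i))) \<in> convex hull price_epigraph p"
      using comb pricing_function_le_top[OF pf]
      by (intro convex_sum[OF _ convex_convex_hull lam_sum] hull_inc)
        (auto simp: price_epigraph_def)
    moreover have "(\<Sum>i<k. lam i *\<^sub>R (xs i, p (xs i))) = (x, t)"
      by (simp add: x t_def prod_eq_iff fst_sum snd_sum)
    moreover have "conv_env p x \<le> t"
      unfolding t_def by (rule conv_env_le_combination[OF pf comb lam_sum x])
    ultimately show "\<exists>z\<in>convex hull price_epigraph p. dist z (x, conv_env p x) < e"
      using close by (intro bexI[of _ "(x, t)"]) (auto simp: dist_Pair_Pair dist_real_def t_def)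
  qed
  ultimately show ?thesis
    using closed_approachable by blast
qed

lemma opt_util_eq_maximum:
  assumes "y \<in> feasible p b" and "\<And>x. x \<in> feasible p b \<Longrightarrow> v x - p x \<le> v y - p y"
  shows "opt_util p v b = ereal (v y - p y)"
  unfolding opt_util_def using assms by (intro antisym SUP_least SUP_upper2[OF assms(1)]) auto

lemma demand_of_maximum:
  assumes "y \<in> feasible p b" and "\<And>x. x \<in> feasible p b \<Longrightarrow> v x - p x \<le> v y - p y"
  shows "y \<in> demand p v b"
  using assms opt_util_eq_maximum[OF assms] by (simp add: demand_def)

lemma revenue_upper: "y \<in> demand p v b \<Longrightarrow> ereal (p y) \<le> revenue p v b"
  unfolding revenue_def by (rule SUP_upper)

lemma revenue_le_budget: "revenue p v b \<le> ereal b"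
  unfolding revenue_def by (rule SUP_least) (auto simp: demand_def feasible_def)

lemma revenue_le_of_common_optimum:
  assumes q_le_p: "\<And>x. x \<in> cube \<Longrightarrow> q x \<le> p x"
    and "y \<in> feasible q b" and q_max: "\<And>x. x \<in> cube \<Longrightarrow> v x - q x \<le> v y - q y"
    and "z \<in> feasible p b" and "v y - q y \<le> v z - p z"
  shows "revenue p v b \<le> revenue q v b"
  unfolding revenue_def
proof (rule SUP_least)
  fix x assume x: "x \<in> demand p v b"
  then have "x \<in> cube" and "p x \<le> b" and x_opt: "ereal (v x - p x) = opt_util p v b"
    by (auto simp: demand_def feasible_def)
  have "ereal (v z - p z) \<le> ereal (v x - p x)"
    unfolding x_opt opt_util_def using \<open>z \<in> feasible p b\<close> by (rule SUP_upper)
  then have "v y - q y \<le> v x - p x"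
    using \<open>v y - q y \<le> v z - p z\<close> by simp
  with q_le_p[OF \<open>x \<in> cube\<close>] q_max[OF \<open>x \<in> cube\<close>]
  have "q x = p x" and "v x - q x = v y - q y"
    by linarith+
  moreover have "opt_util q v b = ereal (v y - q y)"
    using \<open>y \<in> feasible q b\<close> q_max by (intro opt_util_eq_maximum) (auto simp: feasible_def)
  ultimately have "x \<in> demand q v b"
    using \<open>x \<in> cube\<close> \<open>p x \<le> b\<close> by (simp add: demand_def feasible_def)
  then show "ereal (p x) \<le> (SUP x\<in>demand q v b. ereal (q x))"
    using \<open>q x = p x\<close> by (metis SUP_upper)
qed

lemma linear_utility:
  fixes v :: "'a::real_vector \<Rightarrow> real"
  assumes "linear v"
  shows "linear (\<lambda>z::'a \<times> real. v (fst z) - snd z)"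
  by (intro linear_compose_sub linear_compose[OF linear_fst assms, unfolded o_def] linear_snd)

lemma conv_env_budget_maximizer:
  fixes p v :: "real^'m \<Rightarrow> real"
  assumes pf: "pricing_function p" and lc: "lower_continuous p" and "linear v" and "0 \<le> b"
  obtains y where "y \<in> feasible (conv_env p) b"
    and "\<And>x t. (x, t) \<in> convex hull price_epigraph p \<Longrightarrow> t \<le> b \<Longrightarrow>
           v x - t \<le> v y - conv_env p y"
proof -
  define D where "D = convex hull price_epigraph p \<inter> {z. snd z \<le> b}"
  have "compact D"
    unfolding D_def using compact_convex_hull[OF compact_price_epigraph[OF pf lc]]
    by (intro compact_Int_closed closed_Collect_le continuous_intros)
  moreover have "(0, 0) \<in> price_epigraph p"
    using pf pricing_function_nonneg[OF pf, of "vec 1"]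
    by (auto simp: price_epigraph_def pricing_function_def cube_def)
  then have "(0, 0) \<in> D"
    using \<open>0 \<le> b\<close> by (auto simp: D_def hull_inc)
  moreover have "continuous_on D (\<lambda>z. v (fst z) - snd z)"
    using linear_utility[OF \<open>linear v\<close>] unfolding linear_conv_bounded_linear
    by (rule linear_continuous_on)
  ultimately obtain z0 where "z0 \<in> D"
    and z0_max: "\<And>z. z \<in> D \<Longrightarrow> v (fst z) - snd z \<le> v (fst z0) - snd z0"
    using continuous_attains_sup[of D "\<lambda>z. v (fst z) - snd z"] by blast
  obtain y t0 where z0: "z0 = (y, t0)"
    by fastforce
  have "y \<in> cube" "conv_env p y \<le> t0" "t0 \<le> b"
    using \<open>z0 \<in> D\<close> price_epigraph_hull_above_conv_env[OF pf] by (auto simp: D_def z0)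
  moreover have "(y, conv_env p y) \<in> D"
    using conv_env_mem_price_epigraph_hull[OF pf lc \<open>y \<in> cube\<close>] calculation by (simp add: D_def)
  ultimately have "t0 = conv_env p y"
    using z0_max[of "(y, conv_env p y)"] by (simp add: z0)
  show ?thesis
  proof
    show "y \<in> feasible (conv_env p) b"
      using \<open>y \<in> cube\<close> \<open>t0 \<le> b\<close> \<open>t0 = conv_env p y\<close> by (simp add: feasible_def)
    show "v x - t \<le> v y - conv_env p y" if "(x, t) \<in> convex hull price_epigraph p" "t \<le> b" for x t
      using z0_max[of "(x, t)"] that \<open>t0 = conv_env p y\<close> by (simp add: D_def z0)
  qed
qed

lemma conv_env_slack_maximizer:
  fixes p v :: "real^'m \<Rightarrow> real"
  assumes pf: "pricing_function p" and lc: "lower_continuous p" and "linear v"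
    and "conv_env p y < b" and "y \<in> cube"
    and y_max: "\<And>x t. (x, t) \<in> convex hull price_epigraph p \<Longrightarrow> t \<le> b \<Longrightarrow>
           v x - t \<le> v y - conv_env p y"
  shows "\<And>x. x \<in> cube \<Longrightarrow> v x - conv_env p x \<le> v y - conv_env p y"
    and "\<exists>z\<in>feasible p b. v y - conv_env p y \<le> v z - p z"
proof -
  define g where "g z = v (fst z) - snd z" for z :: "(real^'m) \<times> real"
  define y' where "y' = (y, conv_env p y)"
  have "linear g"
    unfolding g_def[abs_def] using \<open>linear v\<close> by (rule linear_utility)
  have global: "g z \<le> g y'" if "z \<in> convex hull price_epigraph p" for z
    using linear_max_slack_constraint[OF convex_convex_hull \<open>linear g\<close> linear_snd, of y' _ b]
      conv_env_mem_price_epigraph_hull[OF pf lc \<open>y \<in> cube\<close>] \<open>conv_env p y < b\<close> y_max that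
    by (auto simp: g_def y'_def)
  then show "v x - conv_env p x \<le> v y - conv_env p y" if "x \<in> cube" for x
    using conv_env_mem_price_epigraph_hull[OF pf lc that] by (auto simp: g_def y'_def)
  have "g w \<le> g y'" if "w \<in> price_epigraph p" for w
    using global[OF hull_inc[OF that]] .
  then have "y' \<in> convex hull {w \<in> price_epigraph p. g w = g y'}"
    using conv_env_mem_price_epigraph_hull[OF pf lc \<open>y \<in> cube\<close>]
    by (intro convex_hull_linear_max_face[OF \<open>linear g\<close>]) (simp_all add: y'_def)
  moreover have "snd y' < b"
    using \<open>conv_env p y < b\<close> by (simp add: y'_def)
  ultimately obtain w where "w \<in> price_epigraph p" "g w = g y'" "snd w < b"
    using convex_hull_linear_less_witness[OF linear_snd] by blast
  then show "\<exists>z\<in>feasible p b. v y - conv_env p y \<le> v z - p z"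
    by (intro bexI[of _ "fst w"]) (auto simp: price_epigraph_def feasible_def g_def y'_def case_prod_beta)
qed

theorem mainTheorem16:
  fixes p :: "real^'m \<Rightarrow> real" and \<tau> :: "real^'m" and b :: real
  assumes "\<forall>j. 0 \<le> \<tau>$j"
    and "b \<ge> 0"
    and "pricing_function p"
    and "lower_continuous p"
  shows "revenue (conv_env p) (linear_val \<tau>) b \<ge> revenue p (linear_val \<tau>) b"
proof -
  note pf = assms(3) and lc = assms(4)
  let ?q = "conv_env p" and ?v = "linear_val \<tau>"
  obtain y where y_feas: "y \<in> feasible ?q b"
    and y_max: "\<And>x t. (x, t) \<in> convex hull price_epigraph p \<Longrightarrow> t \<le> b \<Longrightarrow> ?v x - t \<le> ?v y - ?q y"
    using conv_env_budget_maximizer[OF pf lc linear_linear_val assms(2)] by blast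
  have "y \<in> demand ?q ?v b"
    using y_feas y_max conv_env_mem_price_epigraph_hull[OF pf lc]
    by (intro demand_of_maximum) (auto simp: feasible_def)
  show ?thesis
  proof (cases "?q y < b")
    case True
    have "y \<in> cube"
      using y_feas by (simp add: feasible_def)
    obtain z where "z \<in> feasible p b" and "?v y - ?q y \<le> ?v z - p z"
      using conv_env_slack_maximizer(2)[OF pf lc linear_linear_val True \<open>y \<in> cube\<close> y_max] by blast
    then show ?thesis
      using revenue_le_of_common_optimum[OF conv_env_le_self[OF pf] y_feas
          conv_env_slack_maximizer(1)[OF pf lc linear_linear_val True \<open>y \<in> cube\<close> y_max]]
      by blast
  next
    case False
    then have "?q y = b"
      using y_feas by (simp add: feasible_def)
    then show ?thesis
      using revenue_le_budget revenue_upper[OF \<open>y \<in> demand ?q ?v b\<close>] by (metis order_trans)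
  qed
qed

end
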